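(* Let $\lambda>0$ and $\psi(r)=\frac\lambda2\,\mathrm{dist}(r,\mathbb Z)^2$, and let $y=\hat y+u$ with $u\in\dot{\mathscr W}^{1,2}$ be a locally stable equilibrium. Then $Dy_b\in\mathbb R\setminus(\tfrac12+\mathbb Z)$ for all $b\in\mathcal B$, and $$\sum_{b\in\mathcal B}\psi''(Dy_b)\,Dv_b^2\ge\lambda\|Dv\|_2^2\qquad\text{for all }v\in\dot{\mathscr W}^{1,2}.$$
   Context: $\mathsf R_6$ rotation by $\pi/3$, $a_1=(1,0)^T$, $a_i=\mathsf R_6^{i-1}a_1$, $\Lambda:=(\tfrac12,\tfrac{\sqrt3}{6})^T+\{ma_1+na_2:m,n\in\mathbb Z\}$. Bonds $\mathcal B=\{(\xi,\eta)\in\Lambda^2:|\xi-\eta|=1\}$ (ordered), $Dy_b=y(\eta)-y(\xi)$, $\|Dv\|_2=(\sum_{b\in\mathcal B}|Dv_b|^2)^{1/2}$. $\xi_0=(0,\sqrt3/3)^T$; $\mathscr W_0=\{v:\Lambda\to\mathbb R: v(\xi_0)=0,\ \{b:Dv_b\ne0\}$ bounded$\}$; $\dot{\mathscr W}^{1,2}=\{v: v(\xi_0)=0,\ Dv\in\ell^2(\mathcal B)\}$. $\hat y(x)=\frac1{2\pi}\arg(x)$ on $\Lambda$ (branch cut along the positive $x_1$-axis). For $w\in\mathscr W_0$, $E(y+w;y):=\sum_{b\in\mathcal B}[\psi(Dy_b+Dw_b)-\psi(Dy_b)]$. A displacement $y$ is a locally stable equilibrium if there exists $\epsilon>0$ with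 $E(y+w;y)\ge0$ for all $w\in\mathscr W_0$ with $\|Dw\|_2\le\epsilon$. *)

theory Defs
  imports "HOL-Analysis.Analysis"
begin

text \<open>The plane is identified with the complex numbers. a1 = 1, a2 = R6 a1 = cis(pi/3).\<close>

definition a1 :: complex where "a1 = 1"
definition a2 :: complex where "a2 = cis (pi / 3) * a1"

definition Lat :: "complex set" where
  "Lat = {Complex (1/2) (sqrt 3 / 6) + of_int m * a1 + of_int n * a2 | m n. True}"

definition Bonds :: "(complex \<times> complex) set" where
  "Bonds = {(\<xi>, \<eta>). \<xi> \<in> Lat \<and> \<eta> \<in> Lat \<and> cmod (\<xi> - \<eta>) = 1}"

definition Dif :: "(complex \<Rightarrow> real) \<Rightarrow> complex \<times> complex \<Rightarrow> real" where
  "Dif y b = y (snd b) - y (fst b)"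

definition norm2 :: "(complex \<Rightarrow> real) \<Rightarrow> real" where
  "norm2 v = sqrt (infsum (\<lambda>b. (Dif v b)^2) Bonds)"

definition xi0 :: complex where "xi0 = Complex 0 (sqrt 3 / 3)"

definition W0 :: "(complex \<Rightarrow> real) set" where
  "W0 = {v. v xi0 = 0 \<and> bounded {b \<in> Bonds. Dif v b \<noteq> 0}}"

definition W12 :: "(complex \<Rightarrow> real) set" where
  "W12 = {v. v xi0 = 0 \<and> (\<lambda>b. (Dif v b)^2) summable_on Bonds}"

definition arg0 :: "complex \<Rightarrow> real" where
  "arg0 z = (if Arg z \<ge> 0 then Arg z else Arg z + 2 * pi)"

definition yhat :: "complex \<Rightarrow> real" where
  "yhat x = arg0 x / (2 * pi)"

definition psi :: "real \<Rightarrow> real \<Rightarrow> real" where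
  "psi lam r = lam / 2 * (infdist r \<int>)^2"

definition Energy :: "(real \<Rightarrow> real) \<Rightarrow> (complex \<Rightarrow> real) \<Rightarrow> (complex \<Rightarrow> real) \<Rightarrow> real" where
  "Energy \<psi> w y = infsum (\<lambda>b. \<psi> (Dif y b + Dif w b) - \<psi> (Dif y b)) Bonds"

definition locally_stable :: "(real \<Rightarrow> real) \<Rightarrow> (complex \<Rightarrow> real) \<Rightarrow> bool" where
  "locally_stable \<psi> y \<longleftrightarrow> (\<exists>\<epsilon>>0. \<forall>w\<in>W0. norm2 w \<le> \<epsilon> \<longrightarrow> Energy \<psi> w y \<ge> 0)"

end

theory Submission
  imports Defs
begin

text \<open>Everywhere \<open>\<psi>\<close> lies below the parabola \<open>\<lambda>/2 (x - k)\<^sup>2\<close> through the nearest integer \<open>k\<close>,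
  so its second differences satisfy \<open>\<psi>(r+s) + \<psi>(r-s) - 2\<psi>(r) \<le> \<lambda> s\<^sup>2\<close>; at a half-integer \<open>r\<close>
  it has a concave kink, which improves this to \<open>\<lambda> (s\<^sup>2 - |s|)\<close>. Displacing a single site
  \<open>\<xi> \<noteq> \<xi>\<^sub>0\<close> by \<open>\<plusminus>t\<close> changes only the \<open>N\<close> bonds at \<open>\<xi>\<close>, and adding the energies of
  the two displacements cancels the first-order terms. If a bond at \<open>\<xi>\<close> had a half-integer
  difference, the sum would be at most \<open>\<lambda> (N t\<^sup>2 - t) < 0\<close> for small \<open>t > 0\<close>, so one of the
  two arbitrarily small displacements lowers the energy. Away from half-integers \<open>\<psi>\<close> is
  locally a parabola with \<open>\<psi>'' = \<lambda>\<close>, which gives the second claim with equality.\<close>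

lemma infdist_Ints_attained: "\<exists>k::int. infdist x \<int> = \<bar>x - of_int k\<bar>" for x :: real
proof -
  obtain a where "a \<in> (\<int>::real set)" "infdist x \<int> = dist x a"
    using infdist_attains_inf[OF closed_Ints, of x] by blast
  then show ?thesis by (auto elim!: Ints_cases simp: dist_real_def)
qed

lemma infdist_Ints_le: "infdist x \<int> \<le> \<bar>x - of_int k\<bar>" for x :: real
  using infdist_le[of "of_int k" "\<int>" x] by (simp add: dist_real_def)

lemma infdist_Ints_eqI:
  fixes x :: real
  assumes "\<And>j::int. \<bar>x - of_int k\<bar> \<le> \<bar>x - of_int j\<bar>"
  shows "infdist x \<int> = \<bar>x - of_int k\<bar>"
  using infdist_Ints_attained[of x] assms infdist_Ints_le[of x k] by (metis antisym)

lemma infdist_Ints_half_integer: "infdist (1/2 + of_int m :: real) \<int> = 1/2"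
proof -
  have "\<bar>1/2 + of_int m - of_int m\<bar> \<le> \<bar>1/2 + of_int m - (of_int j :: real)\<bar>" for j
  proof (cases "j \<le> m")
    case True then show ?thesis by simp
  next
    case False then have "of_int m + 1 \<le> (of_int j :: real)" by linarith
    then show ?thesis by simp
  qed
  then show ?thesis using infdist_Ints_eqI[of "1/2 + of_int m" m] by simp
qed

lemma infdist_Ints_near:
  fixes x :: real
  assumes "\<bar>x - of_int k\<bar> < 1/2"
  shows "infdist x \<int> = \<bar>x - of_int k\<bar>"
proof (rule infdist_Ints_eqI)
  fix j :: int
  show "\<bar>x - of_int k\<bar> \<le> \<bar>x - of_int j\<bar>"
  proof (cases "j = k")
    case False
    then have "1 \<le> \<bar>of_int j - (of_int k :: real)\<bar>" by linarith
    then show ?thesis using assms by linarith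
  qed simp
qed

lemma psi_le_quadratic: "0 \<le> lam \<Longrightarrow> psi lam x \<le> lam / 2 * (x - of_int k)^2"
  unfolding psi_def
  using power_mono[OF infdist_Ints_le[of x k] infdist_nonneg, of 2]
  by (intro mult_left_mono) auto

lemma psi_second_difference_le:
  assumes "0 \<le> lam"
  shows "psi lam (r + s) + psi lam (r - s) - 2 * psi lam r \<le> lam * s^2"
proof -
  obtain k where k: "infdist r \<int> = \<bar>r - of_int k\<bar>" using infdist_Ints_attained by blast
  have "psi lam (r + s) \<le> lam / 2 * (r - of_int k + s)^2"
    using psi_le_quadratic[OF assms, of "r + s" k] by (simp add: algebra_simps)
  moreover have "psi lam (r - s) \<le> lam / 2 * (r - of_int k - s)^2"
    using psi_le_quadratic[OF assms, of "r - s" k] by (simp add: algebra_simps)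
  moreover have "psi lam r = lam / 2 * (r - of_int k)^2" by (simp add: psi_def k)
  ultimately show ?thesis by (simp add: power2_eq_square algebra_simps)
qed

lemma psi_second_difference_half_integer:
  assumes "0 \<le> lam" and "r \<in> {1/2 + of_int k | k. True}"
  shows "psi lam (r + s) + psi lam (r - s) - 2 * psi lam r \<le> lam * (s^2 - \<bar>s\<bar>)"
proof -
  obtain m where r: "r = 1/2 + of_int m" using assms(2) by blast
  have "psi lam (r + \<bar>s\<bar>) \<le> lam / 2 * (1/2 - \<bar>s\<bar>)^2"
    using psi_le_quadratic[OF assms(1), of "r + \<bar>s\<bar>" "m + 1"] by (simp add: r power2_commute)
  moreover have "psi lam (r - \<bar>s\<bar>) \<le> lam / 2 * (1/2 - \<bar>s\<bar>)^2"
    using psi_le_quadratic[OF assms(1), of "r - \<bar>s\<bar>" m] by (simp add: r)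
  moreover have "psi lam r = lam / 8"
    by (simp add: psi_def r infdist_Ints_half_integer power2_eq_square)
  moreover have "psi lam (r + s) + psi lam (r - s) = psi lam (r + \<bar>s\<bar>) + psi lam (r - \<bar>s\<bar>)"
    by (cases "0 \<le> s") auto
  ultimately show ?thesis by (simp add: power2_eq_square algebra_simps)
qed

lemma psi_eventually_quadratic:
  assumes "\<bar>x - of_int k\<bar> < 1/2"
  shows "\<forall>\<^sub>F y in nhds x. psi lam y = lam / 2 * (y - of_int k)^2"
proof -
  have "\<forall>\<^sub>F y in nhds x. y \<in> ball (of_int k) (1/2)"
    using assms by (intro eventually_nhds_in_open) (auto simp: dist_real_def abs_minus_commute)
  then show ?thesis
    by eventually_elim (simp add: psi_def dist_real_def abs_minus_commute infdist_Ints_near)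
qed

lemma deriv_psi:
  assumes "\<bar>x - of_int k\<bar> < 1/2"
  shows "deriv (psi lam) x = lam * (x - of_int k)"
proof -
  have "deriv (psi lam) x = deriv (\<lambda>y. lam / 2 * (y - of_int k)^2) x"
    by (rule deriv_cong_ev[OF psi_eventually_quadratic[OF assms]]) simp
  also have "\<dots> = lam * (x - of_int k)"
    by (rule DERIV_imp_deriv) (auto intro!: derivative_eq_intros)
  finally show ?thesis .
qed

lemma deriv2_psi:
  assumes "r \<notin> {1/2 + of_int k | k. True}"
  shows "deriv (deriv (psi lam)) r = lam"
proof -
  define k where "k = \<lfloor>r + 1/2\<rfloor>"
  have "r \<noteq> 1/2 + of_int (k - 1)" using assms by blast
  then have "r \<noteq> of_int k - 1/2" by simp
  moreover have "of_int k - 1/2 \<le> r" "r < of_int k + 1/2"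
    unfolding k_def by linarith+
  ultimately have "of_int k - 1/2 < r" "r < of_int k + 1/2" by auto
  then have near: "\<bar>r - of_int k\<bar> < 1/2"
    unfolding abs_less_iff by linarith
  have "\<forall>\<^sub>F y in nhds r. y \<in> ball (of_int k) (1/2)"
    using near by (intro eventually_nhds_in_open) (auto simp: dist_real_def abs_minus_commute)
  then have "\<forall>\<^sub>F y in nhds r. deriv (psi lam) y = lam * (y - of_int k)"
    by eventually_elim (simp add: dist_real_def abs_minus_commute deriv_psi)
  then have "deriv (deriv (psi lam)) r = deriv (\<lambda>y. lam * (y - of_int k)) r"
    by (rule deriv_cong_ev) simp
  also have "\<dots> = lam"
    by (rule DERIV_imp_deriv) (auto intro!: derivative_eq_intros)
  finally show ?thesis .
qed

lemma Lat_diff: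
  assumes "\<xi> \<in> Lat" "\<eta> \<in> Lat"
  obtains p q :: int where "\<eta> - \<xi> = Complex (of_int p + of_int q / 2) (of_int q * sqrt 3 / 2)"
proof -
  obtain m n m' n' :: int
    where "\<xi> = Complex (1/2) (sqrt 3 / 6) + of_int m * a1 + of_int n * a2"
      and "\<eta> = Complex (1/2) (sqrt 3 / 6) + of_int m' * a1 + of_int n' * a2"
    using assms unfolding Lat_def by blast
  then have "\<eta> - \<xi> = Complex (of_int (m' - m) + of_int (n' - n) / 2) (of_int (n' - n) * sqrt 3 / 2)"
    by (simp add: a1_def a2_def complex_eq_iff cos_60 sin_60 field_simps)
  then show ?thesis by (rule that)
qed

lemma finite_Lat_neighbours:
  assumes "\<xi> \<in> Lat"
  shows "finite {\<eta> \<in> Lat. cmod (\<xi> - \<eta>) = 1}"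
proof (rule finite_subset)
  let ?box = "(\<lambda>(p, q). \<xi> + Complex (of_int p + of_int q / 2) (of_int q * sqrt 3 / 2)) ` ({-1..1} \<times> {-1..1})"
  show "finite ?box" by simp
  show "{\<eta> \<in> Lat. cmod (\<xi> - \<eta>) = 1} \<subseteq> ?box"
  proof clarify
    fix \<eta> assume \<eta>: "\<eta> \<in> Lat" "cmod (\<xi> - \<eta>) = 1"
    obtain p q where pq: "\<eta> - \<xi> = Complex (of_int p + of_int q / 2) (of_int q * sqrt 3 / 2)"
      using Lat_diff[OF assms \<eta>(1)] .
    have "cmod (\<eta> - \<xi>) = 1" using \<eta>(2) by (simp add: norm_minus_commute)
    then have re: "\<bar>of_int p + of_int q / 2\<bar> \<le> (1::real)" and im: "\<bar>of_int q * sqrt 3 / 2\<bar> \<le> (1::real)"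
      using abs_Re_le_cmod[of "\<eta> - \<xi>"] abs_Im_le_cmod[of "\<eta> - \<xi>"] by (simp_all add: pq)
    have "\<bar>q\<bar> \<le> 1"
    proof (rule ccontr)
      assume "\<not> \<bar>q\<bar> \<le> 1"
      then have "2 \<le> \<bar>of_int q :: real\<bar>" by linarith
      moreover have "1 < sqrt (3::real)" by simp
      ultimately have "2 * 1 < \<bar>of_int q :: real\<bar> * sqrt 3"
        by (intro mult_le_less_imp_less) auto
      then show False using im by (simp add: abs_mult)
    qed
    then have "\<bar>p\<bar> \<le> 1" using re by linarith
    with \<open>\<bar>q\<bar> \<le> 1\<close> have "(p, q) \<in> {-1..1} \<times> {-1..1}" by auto
    moreover have "\<eta> = \<xi> + Complex (of_int p + of_int q / 2) (of_int q * sqrt 3 / 2)"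
      using pq by (simp add: algebra_simps)
    ultimately show "\<eta> \<in> ?box" by (auto intro: image_eqI[where x = "(p, q)"])
  qed
qed

definition bonds_at :: "complex \<Rightarrow> (complex \<times> complex) set" where
  "bonds_at \<xi> = {b \<in> Bonds. fst b = \<xi> \<or> snd b = \<xi>}"

definition site_bump :: "complex \<Rightarrow> real \<Rightarrow> complex \<Rightarrow> real" where
  "site_bump \<xi> t x = (if x = \<xi> then t else 0)"

lemma finite_bonds_at:
  assumes "\<xi> \<in> Lat"
  shows "finite (bonds_at \<xi>)"
proof -
  let ?N = "{\<eta> \<in> Lat. cmod (\<xi> - \<eta>) = 1}"
  have "bonds_at \<xi> \<subseteq> {\<xi>} \<times> ?N \<union> ?N \<times> {\<xi>}"
    unfolding bonds_at_def Bonds_def by (auto simp: norm_minus_commute)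
  then show ?thesis
    using finite_Lat_neighbours[OF assms] by (auto intro: finite_subset)
qed

lemma abs_Dif_site_bump:
  assumes "b \<in> Bonds"
  shows "\<bar>Dif (site_bump \<xi> t) b\<bar> = (if b \<in> bonds_at \<xi> then \<bar>t\<bar> else 0)"
proof -
  have "fst b \<noteq> snd b" using assms by (auto simp: Bonds_def)
  then show ?thesis using assms by (auto simp: Dif_def site_bump_def bonds_at_def)
qed

lemma Dif_site_bump_eq_0: "b \<in> Bonds - bonds_at \<xi> \<Longrightarrow> Dif (site_bump \<xi> t) b = 0"
  using abs_Dif_site_bump[of b \<xi> t] by simp

lemma Dif_site_bump_uminus: "Dif (site_bump \<xi> (- t)) b = - Dif (site_bump \<xi> t) b"
  by (simp add: Dif_def site_bump_def)

lemma site_bump_in_W0: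
  assumes "\<xi> \<noteq> xi0"
  shows "site_bump \<xi> t \<in> W0"
proof -
  have "{b \<in> Bonds. Dif (site_bump \<xi> t) b \<noteq> 0} \<subseteq> cball \<xi> 1 \<times> cball \<xi> 1"
    by (auto simp: Bonds_def Dif_def site_bump_def dist_norm norm_minus_commute split: if_splits)
  then have "bounded {b \<in> Bonds. Dif (site_bump \<xi> t) b \<noteq> 0}"
    by (rule bounded_subset[rotated]) (intro bounded_Times bounded_cball)
  then show ?thesis using assms by (simp add: W0_def site_bump_def)
qed

lemma infsum_Bonds_eq_sum_bonds_at:
  assumes "\<xi> \<in> Lat" and "\<And>b. b \<in> Bonds - bonds_at \<xi> \<Longrightarrow> f b = 0"
  shows "infsum f Bonds = (\<Sum>b\<in>bonds_at \<xi>. f b)"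
proof -
  have "infsum f Bonds = infsum f (bonds_at \<xi>)"
    by (rule infsum_cong_neutral) (use assms in \<open>auto simp: bonds_at_def\<close>)
  then show ?thesis using finite_bonds_at[OF assms(1)] by simp
qed

lemma norm2_site_bump:
  assumes "\<xi> \<in> Lat"
  shows "norm2 (site_bump \<xi> t) = sqrt (card (bonds_at \<xi>)) * \<bar>t\<bar>"
proof -
  have "infsum (\<lambda>b. (Dif (site_bump \<xi> t) b)^2) Bonds = (\<Sum>b\<in>bonds_at \<xi>. (Dif (site_bump \<xi> t) b)^2)"
    by (rule infsum_Bonds_eq_sum_bonds_at[OF assms]) (simp add: Dif_site_bump_eq_0)
  also have "\<dots> = (\<Sum>b\<in>bonds_at \<xi>. t^2)"
  proof (rule sum.cong)
    fix b assume "b \<in> bonds_at \<xi>"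
    then have "\<bar>Dif (site_bump \<xi> t) b\<bar> = \<bar>t\<bar>" by (simp add: abs_Dif_site_bump bonds_at_def)
    then show "(Dif (site_bump \<xi> t) b)^2 = t^2" by (metis power2_abs)
  qed simp
  finally show ?thesis by (simp add: norm2_def real_sqrt_mult)
qed

lemma Energy_site_bump:
  assumes "\<xi> \<in> Lat"
  shows "Energy \<psi> (site_bump \<xi> t) y
       = (\<Sum>b\<in>bonds_at \<xi>. \<psi> (Dif y b + Dif (site_bump \<xi> t) b) - \<psi> (Dif y b))"
  unfolding Energy_def
  by (rule infsum_Bonds_eq_sum_bonds_at[OF assms]) (simp add: Dif_site_bump_eq_0)

lemma Energy_site_bump_pair_le:
  fixes lam t :: real
  assumes lam: "0 \<le> lam" and "\<xi> \<in> Lat" and b0: "b0 \<in> bonds_at \<xi>"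
    and half: "Dif y b0 \<in> {1/2 + of_int k | k. True}"
  shows "Energy (psi lam) (site_bump \<xi> t) y + Energy (psi lam) (site_bump \<xi> (- t)) y
       \<le> lam * (card (bonds_at \<xi>) * t^2 - \<bar>t\<bar>)"
proof -
  define S where "S = bonds_at \<xi>"
  define s where "s b = Dif (site_bump \<xi> t) b" for b
  define g where "g b = psi lam (Dif y b + s b) + psi lam (Dif y b - s b) - 2 * psi lam (Dif y b)" for b
  have fin: "finite S" unfolding S_def using finite_bonds_at[OF \<open>\<xi> \<in> Lat\<close>] .
  have abs_s: "\<bar>s b\<bar> = \<bar>t\<bar>" if "b \<in> S" for b
    using that abs_Dif_site_bump[of b \<xi> t] by (simp add: s_def S_def bonds_at_def)
  have sq_s: "(s b)^2 = t^2" if "b \<in> S" for b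
    using abs_s[OF that] by (metis power2_abs)
  have "Energy (psi lam) (site_bump \<xi> t) y + Energy (psi lam) (site_bump \<xi> (- t)) y
      = (\<Sum>b\<in>S. (psi lam (Dif y b + s b) - psi lam (Dif y b)) + (psi lam (Dif y b + - s b) - psi lam (Dif y b)))"
    unfolding Energy_site_bump[OF \<open>\<xi> \<in> Lat\<close>] Dif_site_bump_uminus s_def S_def
    by (rule sum.distrib[symmetric])
  also have "\<dots> = (\<Sum>b\<in>S. g b)"
    by (simp add: g_def)
  also have "\<dots> = g b0 + (\<Sum>b\<in>S - {b0}. g b)"
    using fin b0 by (simp add: S_def sum.remove)
  also have "\<dots> \<le> lam * (t^2 - \<bar>t\<bar>) + (\<Sum>b\<in>S - {b0}. lam * t^2)"
  proof (rule add_mono)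
    show "g b0 \<le> lam * (t^2 - \<bar>t\<bar>)"
      using psi_second_difference_half_integer[OF lam half, of "s b0"] abs_s[of b0] sq_s[of b0] b0
      by (simp add: g_def S_def)
    show "(\<Sum>b\<in>S - {b0}. g b) \<le> (\<Sum>b\<in>S - {b0}. lam * t^2)"
    proof (rule sum_mono)
      fix b assume "b \<in> S - {b0}"
      then show "g b \<le> lam * t^2"
        using psi_second_difference_le[OF lam, of "Dif y b" "s b"] sq_s[of b]
        by (simp add: g_def)
    qed
  qed
  also have "\<dots> = lam * (card S * t^2 - \<bar>t\<bar>)"
  proof -
    have "card S \<ge> 1" using fin b0 card_gt_0_iff[of S] by (auto simp: S_def)
    then show ?thesis using fin b0 by (simp add: S_def card_Diff_singleton of_nat_diff algebra_simps)
  qed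
  finally show ?thesis by (simp add: S_def)
qed

lemma locally_stable_psi_no_half_integer_bond:
  assumes lam: "0 < lam" and stable: "locally_stable (psi lam) y"
  shows "\<forall>b\<in>Bonds. Dif y b \<notin> {1/2 + of_int k | k. True}"
proof (intro ballI notI)
  fix b assume b: "b \<in> Bonds" and half: "Dif y b \<in> {1/2 + of_int k | k. True}"
  define \<xi> where "\<xi> = (if fst b = xi0 then snd b else fst b)"
  have "fst b \<noteq> snd b" using b by (auto simp: Bonds_def)
  then have "\<xi> \<in> Lat" "\<xi> \<noteq> xi0" "b \<in> bonds_at \<xi>"
    using b by (auto simp: \<xi>_def Bonds_def bonds_at_def)
  obtain \<epsilon> where "\<epsilon> > 0"
    and \<epsilon>: "\<And>w. w \<in> W0 \<Longrightarrow> norm2 w \<le> \<epsilon> \<Longrightarrow> Energy (psi lam) w y \<ge> 0"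
    using stable unfolding locally_stable_def by blast
  define N where "N = real (card (bonds_at \<xi>))"
  have "card (bonds_at \<xi>) > 0"
    using finite_bonds_at[OF \<open>\<xi> \<in> Lat\<close>] \<open>b \<in> bonds_at \<xi>\<close> by (auto simp: card_gt_0_iff)
  then have "N \<ge> 1" by (simp add: N_def)
  define t where "t = min \<epsilon> 1 / (2 * N)"
  have "t > 0" using \<open>\<epsilon> > 0\<close> \<open>N \<ge> 1\<close> by (simp add: t_def)
  have Nt: "N * t = min \<epsilon> 1 / 2" using \<open>N \<ge> 1\<close> by (simp add: t_def)
  have "sqrt N \<le> N" using \<open>N \<ge> 1\<close> by (intro real_le_lsqrt) (auto simp: power2_eq_square)
  then have "sqrt N * t \<le> N * t" using \<open>t > 0\<close> by simp
  then have "sqrt N * t \<le> \<epsilon>" using Nt min.cobounded1[of \<epsilon> 1] \<open>\<epsilon> > 0\<close> by linarith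
  have "Energy (psi lam) (site_bump \<xi> s) y \<ge> 0" if "\<bar>s\<bar> = t" for s
  proof (rule \<epsilon>)
    show "site_bump \<xi> s \<in> W0" by (rule site_bump_in_W0[OF \<open>\<xi> \<noteq> xi0\<close>])
    show "norm2 (site_bump \<xi> s) \<le> \<epsilon>"
      using \<open>sqrt N * t \<le> \<epsilon>\<close> by (simp add: norm2_site_bump[OF \<open>\<xi> \<in> Lat\<close>] that N_def)
  qed
  then have "0 \<le> Energy (psi lam) (site_bump \<xi> t) y + Energy (psi lam) (site_bump \<xi> (- t)) y"
    using \<open>t > 0\<close> by (simp add: add_nonneg_nonneg)
  also have "\<dots> \<le> lam * (N * t^2 - t)"
    using Energy_site_bump_pair_le[OF less_imp_le[OF lam] \<open>\<xi> \<in> Lat\<close> \<open>b \<in> bonds_at \<xi>\<close> half, of t]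
      \<open>t > 0\<close> by (simp add: N_def)
  also have "\<dots> < 0"
  proof -
    have "N * t^2 = (N * t) * t" by (simp add: power2_eq_square)
    also have "\<dots> < t" using Nt \<open>t > 0\<close> by simp
    finally show ?thesis using lam by (simp add: mult_pos_neg)
  qed
  finally show False by simp
qed

text \<open>No summability of \<open>Dif v\<close> is needed: otherwise both sides are \<open>0\<close> by the junk value of \<open>infsum\<close>.\<close>

lemma infsum_deriv2_psi_eq:
  assumes "\<forall>b\<in>Bonds. Dif y b \<notin> {1/2 + of_int k | k. True}"
  shows "infsum (\<lambda>b. deriv (deriv (psi lam)) (Dif y b) * (Dif v b)^2) Bonds = lam * (norm2 v)^2"
proof -
  have "infsum (\<lambda>b. deriv (deriv (psi lam)) (Dif y b) * (Dif v b)^2) Bonds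
      = infsum (\<lambda>b. lam * (Dif v b)^2) Bonds"
    by (rule infsum_cong) (use assms deriv2_psi in auto)
  also have "\<dots> = lam * infsum (\<lambda>b. (Dif v b)^2) Bonds" by (rule infsum_cmult_right')
  also have "infsum (\<lambda>b. (Dif v b)^2) Bonds = (norm2 v)^2"
    unfolding norm2_def by (simp add: infsum_nonneg)
  finally show ?thesis .
qed

theorem lemma3p4:
  fixes lam :: real and u :: "complex \<Rightarrow> real"
  assumes "lam > 0"
    and "u \<in> W12"
    and "locally_stable (psi lam) (\<lambda>x. yhat x + u x)"
  shows "(\<forall>b\<in>Bonds. Dif (\<lambda>x. yhat x + u x) b \<notin> {1/2 + of_int k | k. True})
       \<and> (\<forall>v\<in>W12. infsum (\<lambda>b. deriv (deriv (psi lam)) (Dif (\<lambda>x. yhat x + u x) b) * (Dif v b)^2) Bonds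
              \<ge> lam * (norm2 v)^2)"
  using locally_stable_psi_no_half_integer_bond[OF assms(1,3)] infsum_deriv2_psi_eq by simp

end
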